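(* Let $K$ and $K'$ be two non-degenerate CMIs, with $\mathrm{can}(\mathrm{pur}(K))=(C,\langle\mathbb I_K,\mathbb I_K,P_i,1\le i\le t\rangle)$. Let $K''=R_K^{K'}$ and $\mathrm{can}(\mathrm{pur}(K''))=(C'',\langle\mathbb I_{K''},\mathbb I_{K''},P''_j,1\le j\le r\rangle)$, and let $S=C\cup\bigcup_{i=1}^tP_i$ and $P''=\bigcup_{j=1}^rP''_j$. If $K$ implies $K'$ and $R_K^{K'}\ne(\cdot,\langle\ \rangle)$, then $C\subseteq C''\subseteq S\setminus P''$.
   Context: Setting: $X_1,\dots,X_n$ jointly distributed discrete random variables with $H(X_i)<\infty$; distribution unspecified. $X_\alpha=(X_i,i\in\alpha)$, $X_\emptyset$ constant. A CMI is $K=(C,\langle Q_1,\dots,Q_k\rangle)$, $k\ge0$, $C\subseteq\{1,\dots,n\}$, $\langle\cdot\rangle$ an unordered multiset of subsets; valid (for a given distribution) if $\sum_iH(X_{Q_i}|X_C)-H(X_{Q_1},\dots,X_{Q_k}|X_C)=0$. Empty members may be deleted. Degenerate = valid for every distribution, written $(\cdot,\langle\ \rangle)$. "$K$ implies $K'$": for every joint distribution, if $K$ is valid then $K'$ is valid. $\mathrm{pur}(K)=(C,\langle Q_i\setminus C:Q_i\setminus C\ne\emptyset\rangle)$. For pure $K$: $\mathbb I_K$ = indices lying in at least two members of the collection if $k\ge2$, else $\emptyset$; $P_1,\dots,P_t$ the nonempty sets among $Q_i\setminus\mathbb I_K$; $\mathrm{can}(K)=(\cdot,\langle\ \rangle)$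 if $k\le1$, $(C,\langle\mathbb I_K,\mathbb I_K\rangle)$ if $k\ge2,\mathbb I_K\ne\emptyset,t\le1$, $(C,\langle P_1..P_t\rangle)$ if $k\ge2,\mathbb I_K=\emptyset$, $(C,\langle\mathbb I_K,\mathbb I_K,P_1..P_t\rangle)$ if $k\ge2,\mathbb I_K\ne\emptyset,t\ge2$. For general $K$, $\mathbb I_K$ is the repeated-index set of $\mathrm{pur}(K)$; general-form notation omits the copies of $\mathbb I_K$ when empty and uses $t=0$ for $(C,\langle\mathbb I_K,\mathbb I_K\rangle)$. $R_K^{K'}$: with $\mathrm{can}(\mathrm{pur}(K'))=(C',\langle\mathbb I_{K'},\mathbb I_{K'},P'_j,1\le j\le s\rangle)$, $D=\mathbb I_{K'}\setminus\mathbb I_K$ and $T_1,\dots,T_u$ the nonempty sets among $P'_j\setminus\mathbb I_K$: $R_K^{K'}=(\cdot,\langle\ \rangle)$ if $D=\emptyset,u\le1$; $(C'\setminus\mathbb I_K,\langle T_1..T_u\rangle)$ if $D=\emptyset,u\ge2$; $(C'\setminus\mathbb I_K,\langle D,D\rangle)$ if $D\ne\emptyset,u\le1$; $(C'\setminus\mathbb I_K,\langle D,D,T_1..T_u\rangle)$ if $D\ne\emptyset,u\ge2$. *)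

theory Defs
  imports "HOL-Probability.Probability_Mass_Function" "HOL-Analysis.Infinite_Sum"
          "HOL-Library.Multiset"
begin

text \<open>A joint distribution of X_1..X_n: a pmf p on nat => nat; X_i is coordinate i.
  Every countable alphabet embeds into nat, and entropies are invariant under relabelling.\<close>

definition marg :: "(nat \<Rightarrow> nat) pmf \<Rightarrow> nat set \<Rightarrow> (nat \<Rightarrow> nat) pmf" where
  "marg p \<alpha> = map_pmf (\<lambda>\<omega> i. if i \<in> \<alpha> then \<omega> i else 0) p"

definition entr_terms :: "'a pmf \<Rightarrow> 'a \<Rightarrow> real" where
  "entr_terms q x = - pmf q x * log 2 (pmf q x)"

text \<open>Shannon entropy H(X_alpha) (meaningful when finite).\<close>
definition H :: "(nat \<Rightarrow> nat) pmf \<Rightarrow> nat set \<Rightarrow> real" where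
  "H p \<alpha> = infsum (entr_terms (marg p \<alpha>)) UNIV"

definition finite_entropy :: "(nat \<Rightarrow> nat) pmf \<Rightarrow> nat set \<Rightarrow> bool" where
  "finite_entropy p \<alpha> \<longleftrightarrow> entr_terms (marg p \<alpha>) summable_on UNIV"

definition condH :: "(nat \<Rightarrow> nat) pmf \<Rightarrow> nat set \<Rightarrow> nat set \<Rightarrow> real" where
  "condH p A C = H p (A \<union> C) - H p C"

definition admissible :: "nat \<Rightarrow> (nat \<Rightarrow> nat) pmf \<Rightarrow> bool" where
  "admissible n p \<longleftrightarrow> (\<forall>i\<in>{1..n}. finite_entropy p {i})"

text \<open>A CMI (C, <Q_1..Q_k>) with an unordered multiset of subsets.\<close>
type_synonym cmi = "nat set \<times> nat set multiset"

definition wf_cmi :: "nat \<Rightarrow> cmi \<Rightarrow> bool" where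
  "wf_cmi n K \<longleftrightarrow> fst K \<subseteq> {1..n} \<and> (\<forall>Q\<in>#snd K. Q \<subseteq> {1..n})"

definition valid :: "(nat \<Rightarrow> nat) pmf \<Rightarrow> cmi \<Rightarrow> bool" where
  "valid p K \<longleftrightarrow>
     (\<Sum>Q\<in>#snd K. condH p Q (fst K)) - condH p (\<Union>(set_mset (snd K))) (fst K) = 0"

definition degenerate :: "nat \<Rightarrow> cmi \<Rightarrow> bool" where
  "degenerate n K \<longleftrightarrow> (\<forall>p. admissible n p \<longrightarrow> valid p K)"

definition implies :: "nat \<Rightarrow> cmi \<Rightarrow> cmi \<Rightarrow> bool" where
  "implies n K K' \<longleftrightarrow> (\<forall>p. admissible n p \<longrightarrow> valid p K \<longrightarrow> valid p K')"

definition pur :: "cmi \<Rightarrow> cmi" where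
  "pur K = (fst K, filter_mset (\<lambda>Q. Q \<noteq> {}) (image_mset (\<lambda>Q. Q - fst K) (snd K)))"

text \<open>Repeated-index set of a (pure) CMI; members counted with multiplicity.\<close>
definition rep_idx :: "cmi \<Rightarrow> nat set" where
  "rep_idx K = (if size (snd K) \<ge> 2
     then {x. size (filter_mset (\<lambda>Q. x \<in> Q) (snd K)) \<ge> 2} else {})"

definition IK :: "cmi \<Rightarrow> nat set" where
  "IK K = rep_idx (pur K)"

definition Pparts :: "cmi \<Rightarrow> nat set multiset" where
  "Pparts K = filter_mset (\<lambda>P. P \<noteq> {}) (image_mset (\<lambda>Q. Q - rep_idx K) (snd K))"

text \<open>Canonical form in general-form notation: None stands for the degenerate symbol
  (\<cdot>,< >); Some (C, I, Ps) stands for (C, <I, I, Ps>), where the copies of I are omitted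
  when I is empty, and Ps is empty in the case (C,<I,I>).\<close>
definition canGF :: "cmi \<Rightarrow> (nat set \<times> nat set \<times> nat set multiset) option" where
  "canGF K = (let k = size (snd K); I = rep_idx K; Ps = Pparts K; t = size Ps in
     if k \<le> 1 then None
     else if I \<noteq> {} \<and> t \<le> 1 then Some (fst K, I, {#})
     else Some (fst K, I, Ps))"

definition can :: "cmi \<Rightarrow> cmi option" where
  "can K = map_option (\<lambda>(C, I, Ps). (C, (if I = {} then {#} else {#I, I#}) + Ps)) (canGF K)"

text \<open>R_K^{K'}; None stands for the degenerate symbol (\<cdot>,< >).\<close>
definition RKK :: "cmi \<Rightarrow> cmi \<Rightarrow> cmi option" where
  "RKK K K' = (case canGF (pur K') of
      None \<Rightarrow> None
    | Some (C', I', Ps') \<Rightarrow>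
        (let D = I' - IK K;
             Ts = filter_mset (\<lambda>T. T \<noteq> {}) (image_mset (\<lambda>P. P - IK K) Ps');
             u = size Ts in
         if D = {} \<and> u \<le> 1 then None
         else if D = {} then Some (C' - IK K, Ts)
         else if u \<le> 1 then Some (C' - IK K, {#D, D#})
         else Some (C' - IK K, {#D, D#} + Ts)))"

end

theory Submission
  imports Defs
begin

(* Each inclusion is proved by contraposition: a violation yields an explicit distribution of a
   few fair bits under which K is valid but K' is not.  A single fair bit copied to every
   coordinate of a set A separates K from K' when A meets C but not C', or when A = {d} for an
   index d repeated in K' but not in K; hence C \<subseteq> C' and I_K' \<subseteq> I_K, so D is empty
   and C'' = C' - I_K.  If some x \<in> C'' lay outside S, take y1, y2 in two different sets T_j
   and let y1, y2 carry independent fair bits and x their exclusive or.  Given X_x the bits at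
   y1 and y2 determine each other, so K' fails; K still holds, because x lies in no member of K
   (or at most one member of K meets {x, y1, y2}) and no index of the triple is repeated in K.
   Finally C'' is disjoint from the P''_j since these come from the pure form of K''. *)

section \<open>Entropy of finitely supported distributions\<close>

abbreviation pmf_entropy :: "'a pmf \<Rightarrow> real" where
  "pmf_entropy q \<equiv> infsum (entr_terms q) UNIV"

lemma entr_terms_outside_support: "x \<notin> set_pmf q \<Longrightarrow> entr_terms q x = 0"
  by (simp add: entr_terms_def set_pmf_iff)

lemma pmf_entropy_finite_support:
  assumes "finite (set_pmf q)"
  shows "pmf_entropy q = (\<Sum>x\<in>set_pmf q. entr_terms q x)"
proof -
  have "pmf_entropy q = infsum (entr_terms q) (set_pmf q)"
    by (rule infsum_cong_neutral) (auto simp: entr_terms_outside_support)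
  with assms show ?thesis by simp
qed

lemma entr_terms_summable_finite_support:
  assumes "finite (set_pmf q)"
  shows "entr_terms q summable_on UNIV"
proof -
  have "entr_terms q summable_on set_pmf q" using assms by simp
  then show ?thesis
    by (rule summable_on_cong_neutral[THEN iffD1, rotated -1]) (auto simp: entr_terms_outside_support)
qed

lemma pmf_entropy_pmf_of_set:
  assumes "finite S" "S \<noteq> {}"
  shows "pmf_entropy (pmf_of_set S) = log 2 (card S)"
proof -
  have "card S > 0" using assms by (simp add: card_gt_0_iff)
  have "pmf_entropy (pmf_of_set S) = (\<Sum>x\<in>S. - (1 / card S) * log 2 (1 / card S))"
    using assms by (simp add: pmf_entropy_finite_support entr_terms_def)
  also have "\<dots> = log 2 (card S)"
    using \<open>card S > 0\<close> by (simp add: log_divide)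
  finally show ?thesis .
qed

lemma pmf_entropy_map_pmf_inj:
  assumes "inj_on g (set_pmf q)" "finite (set_pmf q)"
  shows "pmf_entropy (map_pmf g q) = pmf_entropy q"
proof -
  have "pmf_entropy (map_pmf g q) = (\<Sum>x\<in>g ` set_pmf q. entr_terms (map_pmf g q) x)"
    using assms by (simp add: pmf_entropy_finite_support)
  also have "\<dots> = (\<Sum>x\<in>set_pmf q. entr_terms q x)"
    using assms by (simp add: sum.reindex entr_terms_def pmf_map_inj)
  finally show ?thesis
    using assms by (simp add: pmf_entropy_finite_support)
qed

lemma pmf_entropy_return_pmf: "pmf_entropy (return_pmf c) = 0"
  using pmf_entropy_pmf_of_set[of "{c}"] by (simp add: pmf_of_set_singleton)

lemma pmf_entropy_map_fair_bit:
  "pmf_entropy (map_pmf g (pmf_of_set (UNIV :: bool set))) = of_bool (g True \<noteq> g False)"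
proof (cases "g True = g False")
  case True
  then have "g = (\<lambda>_. g True)" by (metis (full_types))
  then show ?thesis using True by (metis map_pmf_const pmf_entropy_return_pmf of_bool_eq(1))
next
  case False
  then have "inj g" by (metis (full_types) injI)
  then have "pmf_entropy (map_pmf g (pmf_of_set UNIV)) = pmf_entropy (pmf_of_set (UNIV :: bool set))"
    by (intro pmf_entropy_map_pmf_inj) (auto intro: inj_on_subset)
  also have "\<dots> = 1"
    by (subst pmf_entropy_pmf_of_set) auto
  finally show ?thesis using False by simp
qed

lemma map_pmf_of_set_UNIV_balanced:
  fixes L :: "'a::finite \<Rightarrow> 'b::finite"
  assumes "\<And>v. card (L -` {v}) * CARD('b) = CARD('a)"
  shows "map_pmf L (pmf_of_set UNIV) = pmf_of_set UNIV"
proof (rule pmf_eqI)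
  fix v
  have "pmf (map_pmf L (pmf_of_set UNIV)) v = card (L -` {v}) / CARD('a)"
    by (simp add: pmf_map measure_pmf_of_set)
  also have "\<dots> = 1 / CARD('b)"
    using assms[of v] by (simp add: field_simps flip: of_nat_mult)
  finally show "pmf (map_pmf L (pmf_of_set UNIV)) v = pmf (pmf_of_set UNIV) v"
    by simp
qed

lemma marg_map_pmf: "marg (map_pmf F q) \<alpha> = map_pmf (\<lambda>\<omega> i. if i \<in> \<alpha> then F \<omega> i else 0) q"
  by (simp add: marg_def map_pmf_comp)

lemma admissible_finite_support: "finite (set_pmf p) \<Longrightarrow> admissible n p"
  by (simp add: admissible_def finite_entropy_def marg_def entr_terms_summable_finite_support)

section \<open>Two test distributions\<close>

definition shared_bit :: "nat set \<Rightarrow> (nat \<Rightarrow> nat) pmf" where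
  "shared_bit A = map_pmf (\<lambda>b i. if i \<in> A then of_bool b else 0) (pmf_of_set UNIV)"

lemma admissible_shared_bit: "admissible n (shared_bit A)"
  by (simp add: admissible_finite_support shared_bit_def)

lemma H_shared_bit: "H (shared_bit A) \<alpha> = of_bool (\<alpha> \<inter> A \<noteq> {})"
proof -
  have "(\<lambda>i. if i \<in> \<alpha> then if i \<in> A then of_bool True else 0 else (0::nat)) \<noteq>
        (\<lambda>i. if i \<in> \<alpha> then if i \<in> A then of_bool False else 0 else 0) \<longleftrightarrow> \<alpha> \<inter> A \<noteq> {}"
    by (simp add: fun_eq_iff) blast
  then show ?thesis
    unfolding H_def shared_bit_def marg_map_pmf pmf_entropy_map_fair_bit by presburger
qed

definition xor_bits :: "nat \<Rightarrow> nat \<Rightarrow> nat \<Rightarrow> bool \<times> bool \<Rightarrow> nat \<Rightarrow> bool" where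
  "xor_bits x y1 y2 \<omega> i =
     (if i = y1 then fst \<omega> else if i = y2 then snd \<omega> else i = x \<and> fst \<omega> \<noteq> snd \<omega>)"

definition xor_triple :: "nat \<Rightarrow> nat \<Rightarrow> nat \<Rightarrow> (nat \<Rightarrow> nat) pmf" where
  "xor_triple x y1 y2 = map_pmf (\<lambda>\<omega> i. of_bool (xor_bits x y1 y2 \<omega> i)) (pmf_of_set UNIV)"

lemma admissible_xor_triple: "admissible n (xor_triple x y1 y2)"
  by (simp add: admissible_finite_support xor_triple_def)

lemma xor_bits_uniform:
  assumes "distinct [x, y1, y2]" "r \<in> {x, y1, y2}"
  shows "map_pmf (\<lambda>\<omega>. xor_bits x y1 y2 \<omega> r) (pmf_of_set UNIV) = pmf_of_set UNIV"
proof (rule map_pmf_of_set_UNIV_balanced)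
  fix v
  have "(\<lambda>\<omega>. xor_bits x y1 y2 \<omega> r) -` {v} = {(v, True), (v, False)}" if "r = y1"
    using that by (auto simp: xor_bits_def vimage_def)
  moreover have "(\<lambda>\<omega>. xor_bits x y1 y2 \<omega> r) -` {v} = {(True, v), (False, v)}" if "r = y2"
    using that assms(1) by (auto simp: xor_bits_def vimage_def)
  moreover have "(\<lambda>\<omega>. xor_bits x y1 y2 \<omega> r) -` {v} = {(True, \<not> v), (False, v)}" if "r = x"
    using that assms(1) by (auto simp: xor_bits_def vimage_def)
  ultimately have "card ((\<lambda>\<omega>. xor_bits x y1 y2 \<omega> r) -` {v}) = 2"
    using assms(2) by (elim insertE) auto
  then show "card ((\<lambda>\<omega>. xor_bits x y1 y2 \<omega> r) -` {v}) * CARD(bool) = CARD(bool \<times> bool)"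
    by (simp add: card_UNIV_bool)
qed

lemma xor_bits_inj:
  assumes "distinct [x, y1, y2]" "{r1, r2} \<subseteq> {x, y1, y2}" "r1 \<noteq> r2"
    and "xor_bits x y1 y2 \<omega> r1 = xor_bits x y1 y2 \<omega>' r1" "xor_bits x y1 y2 \<omega> r2 = xor_bits x y1 y2 \<omega>' r2"
  shows "\<omega> = \<omega>'"
proof -
  have "fst \<omega> = fst \<omega>' \<and> snd \<omega> = snd \<omega>'"
    using assms unfolding xor_bits_def by auto
  then show ?thesis by (simp add: prod_eq_iff)
qed

lemma H_xor_triple:
  assumes d: "distinct [x, y1, y2]"
  shows "H (xor_triple x y1 y2) \<alpha> = min 2 (card (\<alpha> \<inter> {x, y1, y2}))"
proof -
  let ?R = "{x, y1, y2}"
  let ?g = "\<lambda>\<omega> i. if i \<in> \<alpha> then of_bool (xor_bits x y1 y2 \<omega> i) else (0::nat)"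
  have H_eq: "H (xor_triple x y1 y2) \<alpha> = pmf_entropy (map_pmf ?g (pmf_of_set UNIV))"
    by (simp add: H_def xor_triple_def marg_map_pmf)
  have support: "i \<in> ?R" if "xor_bits x y1 y2 \<omega> i" for i \<omega>
    using that by (auto simp: xor_bits_def split: if_splits)
  consider "\<alpha> \<inter> ?R = {}" | r where "\<alpha> \<inter> ?R = {r}" | r1 r2 where "{r1, r2} \<subseteq> \<alpha> \<inter> ?R" "r1 \<noteq> r2"
    by blast
  then show ?thesis
  proof cases
    case 1
    then have "?g = (\<lambda>_ _. 0)"
      using support by (fastforce simp: fun_eq_iff)
    with 1 show ?thesis
      by (simp only: H_eq map_pmf_const pmf_entropy_return_pmf) simp
  next
    case 2
    let ?bit = "\<lambda>b i. if i = r then of_bool b else (0::nat)"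
    have "?g = ?bit \<circ> (\<lambda>\<omega>. xor_bits x y1 y2 \<omega> r)"
      using 2 support by (fastforce simp: fun_eq_iff)
    moreover have "map_pmf (\<lambda>\<omega>. xor_bits x y1 y2 \<omega> r) (pmf_of_set UNIV) = pmf_of_set UNIV"
      using 2 by (intro xor_bits_uniform[OF d]) blast
    ultimately have "map_pmf ?g (pmf_of_set UNIV) = map_pmf ?bit (pmf_of_set UNIV)"
      by (simp add: map_pmf_compose)
    with 2 show ?thesis
      by (simp only: H_eq pmf_entropy_map_fair_bit) (simp add: fun_eq_iff)
  next
    case 3
    have "inj ?g"
    proof (rule injI)
      fix \<omega> \<omega>' assume eq: "?g \<omega> = ?g \<omega>'"
      have "xor_bits x y1 y2 \<omega> r = xor_bits x y1 y2 \<omega>' r" if "r \<in> \<alpha>" for r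
        using fun_cong[OF eq, of r] that by (simp add: of_bool_eq_iff)
      with 3 show "\<omega> = \<omega>'"
        by (intro xor_bits_inj[OF d, of r1 r2]) auto
    qed
    then have "H (xor_triple x y1 y2) \<alpha> = pmf_entropy (pmf_of_set (UNIV :: (bool \<times> bool) set))"
      unfolding H_eq by (intro pmf_entropy_map_pmf_inj) (auto intro: inj_on_subset)
    also have "\<dots> = 2"
      using log_pow_cancel[of 2 2] by (subst pmf_entropy_pmf_of_set) (auto simp: card_UNIV_bool)
    finally show ?thesis
      using 3 card_mono[of "\<alpha> \<inter> ?R" "{r1, r2}"] by auto
  qed
qed

section \<open>Pure forms, repeated indices and parts\<close>

abbreviation occurrences :: "'a \<Rightarrow> 'a set multiset \<Rightarrow> nat" where
  "occurrences y M \<equiv> size {#Q \<in># M. y \<in> Q#}"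

lemma sum_mset_of_bool: "(\<Sum>x\<in>#M. of_bool (P x) :: 'b::semiring_1) = of_nat (size (filter_mset P M))"
  by (induction M) auto

lemma two_le_size_filter_mset:
  assumes "{#a, b#} \<subseteq># M" "P a" "P b"
  shows "2 \<le> size (filter_mset P M)"
proof -
  have "{#a, b#} \<subseteq># filter_mset P M"
    using multiset_filter_mono[OF assms(1), of P] assms(2,3) by simp
  from size_mset_mono[OF this] show ?thesis
    by simp
qed

lemma two_le_size_filter_msetE:
  assumes "2 \<le> size (filter_mset P M)"
  obtains a b where "{#a, b#} \<subseteq># M" "P a" "P b"
proof -
  obtain a N where N: "filter_mset P M = add_mset a N"
    using assms by (metis multiset_cases not_numeral_le_zero size_empty)
  then have "1 \<le> size N"
    using assms by simp
  then obtain b N' where "N = add_mset b N'"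
    by (metis multiset_cases not_one_le_zero size_empty)
  with N have ab: "{#a, b#} \<subseteq># filter_mset P M"
    by simp
  then have "P a" "P b"
    using mset_subset_eqD[OF ab] by auto
  with ab show ?thesis
    using that multiset_filter_subset subset_mset.order_trans by blast
qed

lemma size_filter_mset_le_1_eq:
  "size (filter_mset P M) \<le> 1 \<Longrightarrow> size (filter_mset P M) = of_bool (\<exists>x\<in>#M. P x)"
  using nonempty_has_size[of "filter_mset P M"] by (cases "filter_mset P M = {#}") auto

lemma sum_mset_filter_mset_neutral:
  "(\<And>x. x \<in># M \<Longrightarrow> \<not> P x \<Longrightarrow> f x = 0) \<Longrightarrow> (\<Sum>x\<in>#filter_mset P M. f x) = (\<Sum>x\<in>#M. f x)"
  by (induction M) auto

lemma fst_pur [simp]: "fst (pur K) = fst K"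
  by (simp add: pur_def)

lemma snd_pur: "snd (pur K) = image_mset (\<lambda>Q. Q - fst K) {#Q \<in># snd K. Q - fst K \<noteq> {}#}"
  by (simp add: pur_def filter_mset_image_mset)

lemma size_snd_pur: "size (snd (pur K)) = size {#Q \<in># snd K. Q - fst K \<noteq> {}#}"
  by (simp add: snd_pur)

lemma occurrences_snd_pur:
  "occurrences y (snd (pur K)) = (if y \<in> fst K then 0 else occurrences y (snd K))"
proof -
  have "occurrences y (snd (pur K)) = size {#Q \<in># snd K. Q - fst K \<noteq> {} \<and> y \<in> Q - fst K#}"
    by (simp add: snd_pur filter_mset_image_mset filter_filter_mset)
  also have "{#Q \<in># snd K. Q - fst K \<noteq> {} \<and> y \<in> Q - fst K#} =
      (if y \<in> fst K then {#} else {#Q \<in># snd K. y \<in> Q#})"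
    by (auto intro: filter_mset_cong)
  finally show ?thesis
    by simp
qed

lemma mem_IK_iff: "y \<in> IK K \<longleftrightarrow> y \<notin> fst K \<and> 2 \<le> occurrences y (snd K)"
proof (cases "2 \<le> size (snd (pur K))")
  case True
  then show ?thesis
    by (simp add: IK_def rep_idx_def occurrences_snd_pur)
next
  case False
  then have "occurrences y (snd (pur K)) \<le> 1"
    using size_filter_mset_lesseq[of "\<lambda>Q. y \<in> Q" "snd (pur K)"] by linarith
  with False show ?thesis
    by (auto simp: IK_def rep_idx_def occurrences_snd_pur split: if_splits)
qed

lemma Pparts_pur:
  "Pparts (pur K) = image_mset (\<lambda>Q. Q - fst K - IK K) {#Q \<in># snd K. Q - fst K - IK K \<noteq> {}#}"
proof -
  have "{#Q \<in># {#Q \<in># snd K. Q - fst K \<noteq> {}#}. Q - fst K - IK K \<noteq> {}#} =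
      {#Q \<in># snd K. Q - fst K - IK K \<noteq> {}#}"
    by (auto simp: filter_filter_mset intro: filter_mset_cong)
  then show ?thesis
    by (simp add: Pparts_def snd_pur filter_mset_image_mset image_mset.compositionality
        o_def flip: IK_def)
qed

lemma Pparts_pur_disjoint_fst: "P \<in># Pparts (pur K) \<Longrightarrow> P \<inter> fst K = {}"
  by (auto simp: Pparts_pur)

lemma canGF_SomeD:
  assumes "canGF K = Some (C, I, Ps)"
  shows "C = fst K" "I = rep_idx K" "2 \<le> size (snd K)"
    and "Ps = Pparts K \<or> Ps = {#} \<and> size (Pparts K) \<le> 1"
  using assms by (auto simp: canGF_def Let_def split: if_splits)

section \<open>Validity under the test distributions\<close>

lemma valid_iff_size_filter_le_1:
  assumes "\<And>Q. condH p Q (fst K) = of_bool (Q \<inter> B \<noteq> {})"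
  shows "valid p K \<longleftrightarrow> size {#Q \<in># snd K. Q \<inter> B \<noteq> {}#} \<le> 1"
proof -
  let ?s = "size {#Q \<in># snd K. Q \<inter> B \<noteq> {}#}"
  have "(\<Sum>Q\<in>#snd K. condH p Q (fst K)) = ?s"
    by (simp add: assms sum_mset_of_bool)
  moreover have "condH p (\<Union>(set_mset (snd K))) (fst K) = of_bool (?s \<noteq> 0)"
    by (auto simp: assms)
  ultimately have "valid p K \<longleftrightarrow> real ?s - of_bool (?s \<noteq> 0) = 0"
    by (simp add: valid_def)
  also have "\<dots> \<longleftrightarrow> ?s \<le> 1"
    using le_Suc_eq by (cases ?s) auto
  finally show ?thesis .
qed

lemma valid_if_at_most_one_member_meets:
  assumes "\<And>Q. condH p Q (fst K) = f (Q \<inter> R)" "f {} = 0"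
    and "size {#Q \<in># snd K. Q \<inter> R \<noteq> {}#} \<le> 1"
  shows "valid p K"
proof -
  let ?N = "{#Q \<in># snd K. Q \<inter> R \<noteq> {}#}"
  have sum_N: "(\<Sum>Q\<in>#snd K. condH p Q (fst K)) = (\<Sum>Q\<in>#?N. f (Q \<inter> R))"
    by (subst sum_mset_filter_mset_neutral) (auto simp: assms)
  consider "?N = {#}" | Q0 where "?N = {#Q0#}"
    using assms(3) size_1_singleton_mset[of ?N] by (cases "size ?N") auto
  then show ?thesis
  proof cases
    case 1
    then have "\<Union>(set_mset (snd K)) \<inter> R = {}"
      by auto
    with assms(1,2) show ?thesis
      unfolding valid_def sum_N 1 by simp
  next
    case 2
    have "Q \<in># ?N \<longleftrightarrow> Q = Q0" for Q
      using 2 by simp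
    then have "\<Union>(set_mset (snd K)) \<inter> R = Q0 \<inter> R"
      by auto
    with assms(1) show ?thesis
      unfolding valid_def sum_N 2 by simp
  qed
qed

lemma condH_shared_bit:
  "condH (shared_bit A) Q C = (if C \<inter> A = {} then of_bool (Q \<inter> A \<noteq> {}) else 0)"
  by (auto simp: condH_def H_shared_bit)

lemma valid_shared_bit_iff:
  "valid (shared_bit A) K \<longleftrightarrow> fst K \<inter> A \<noteq> {} \<or> size {#Q \<in># snd K. Q \<inter> A \<noteq> {}#} \<le> 1"
proof (cases "fst K \<inter> A = {}")
  case True
  then show ?thesis
    by (simp add: valid_iff_size_filter_le_1 condH_shared_bit)
next
  case False
  then show ?thesis
    by (simp add: valid_def condH_shared_bit)
qed

lemma condH_xor_triple_disjoint:
  assumes "distinct [x, y1, y2]" "C \<inter> {x, y1, y2} = {}"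
  shows "condH (xor_triple x y1 y2) Q C = min 2 (card (Q \<inter> {x, y1, y2}))"
proof -
  have "(Q \<union> C) \<inter> {x, y1, y2} = Q \<inter> {x, y1, y2}"
    using assms(2) by blast
  with assms show ?thesis
    by (simp add: condH_def H_xor_triple)
qed

lemma condH_xor_triple_given_x:
  assumes "distinct [x, y1, y2]" "C \<inter> {x, y1, y2} = {x}"
  shows "condH (xor_triple x y1 y2) Q C = of_bool (Q \<inter> {y1, y2} \<noteq> {})"
proof -
  have "(Q \<union> C) \<inter> {x, y1, y2} = insert x (Q \<inter> {y1, y2})"
    using assms(2) by blast
  with assms show ?thesis
    by (cases "y1 \<in> Q"; cases "y2 \<in> Q") (auto simp: condH_def H_xor_triple Int_insert_left)
qed

lemma valid_xor_triple_if_x_unused: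
  assumes "distinct [x, y1, y2]" "fst K \<inter> {x, y1, y2} = {}" "\<forall>Q\<in>#snd K. x \<notin> Q"
    and "occurrences y1 (snd K) \<le> 1" "occurrences y2 (snd K) \<le> 1"
  shows "valid (xor_triple x y1 y2) K"
proof -
  have bits: "condH (xor_triple x y1 y2) Q (fst K) = of_bool (y1 \<in> Q) + of_bool (y2 \<in> Q)"
    if "x \<notin> Q" for Q
    using assms(1) that
    by (cases "y1 \<in> Q"; cases "y2 \<in> Q") (auto simp: condH_xor_triple_disjoint[OF assms(1,2)] Int_insert_right)
  have "(\<Sum>Q\<in>#snd K. condH (xor_triple x y1 y2) Q (fst K)) =
      real (occurrences y1 (snd K)) + real (occurrences y2 (snd K))"
    using assms(3) by (simp add: bits sum_mset.distrib sum_mset_of_bool cong: image_mset_cong)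
  also have "\<dots> = of_bool (y1 \<in> \<Union>(set_mset (snd K))) + of_bool (y2 \<in> \<Union>(set_mset (snd K)))"
    using size_filter_mset_le_1_eq[OF assms(4)] size_filter_mset_le_1_eq[OF assms(5)] by auto
  also have "\<dots> = condH (xor_triple x y1 y2) (\<Union>(set_mset (snd K))) (fst K)"
    using assms(3) by (subst bits) auto
  finally show ?thesis
    by (simp add: valid_def)
qed

lemma valid_xor_triple:
  assumes "canGF (pur K) = Some (C, I, Ps)" "distinct [x, y1, y2]"
    and "{x, y1, y2} \<inter> (fst K \<union> IK K) = {}" "x \<notin> \<Union>(set_mset Ps)"
  shows "valid (xor_triple x y1 y2) K"
proof -
  have disj: "fst K \<inter> {x, y1, y2} = {}"
    using assms(3) by blast
  consider "Ps = Pparts (pur K)" | "size (Pparts (pur K)) \<le> 1"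
    using canGF_SomeD(4)[OF assms(1)] by auto
  then show ?thesis
  proof cases
    case 1
    have "x \<notin> Q" if "Q \<in># snd K" for Q
    proof
      assume "x \<in> Q"
      with assms(3) have "x \<in> Q - fst K - IK K" by blast
      moreover have "Q - fst K - IK K \<in># Ps"
        using 1 that \<open>x \<in> Q - fst K - IK K\<close> by (auto simp: Pparts_pur)
      ultimately show False
        using assms(4) by blast
    qed
    moreover have "occurrences y (snd K) \<le> 1" if "y \<in> {y1, y2}" for y
      using assms(3) that mem_IK_iff[of y K] by auto
    ultimately show ?thesis
      using valid_xor_triple_if_x_unused[OF assms(2) disj] by simp
  next
    case 2
    have "size {#Q \<in># snd K. Q \<inter> {x, y1, y2} \<noteq> {}#} \<le> size {#Q \<in># snd K. Q - fst K - IK K \<noteq> {}#}"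
      using assms(3) by (intro size_mset_mono filter_mset_mono_strong) auto
    also have "\<dots> \<le> 1"
      using 2 by (simp add: Pparts_pur)
    finally have "size {#Q \<in># snd K. Q \<inter> {x, y1, y2} \<noteq> {}#} \<le> 1" .
    then show ?thesis
      by (rule valid_if_at_most_one_member_meets[where f = "\<lambda>S. min 2 (card S)", rotated 2])
        (simp_all add: condH_xor_triple_disjoint[OF assms(2) disj])
  qed
qed

section \<open>Consequences of an implication\<close>

lemma implies_fst_subset:
  assumes "implies n K K'" "2 \<le> size (snd (pur K'))"
  shows "fst K \<subseteq> fst K'"
proof
  fix c assume "c \<in> fst K"
  show "c \<in> fst K'"
  proof (rule ccontr)
    assume "c \<notin> fst K'"
    obtain Q1 Q2 where Q: "{#Q1, Q2#} \<subseteq># snd K'" "Q1 - fst K' \<noteq> {}" "Q2 - fst K' \<noteq> {}"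
      using assms(2) unfolding size_snd_pur by (elim two_le_size_filter_msetE) blast
    then obtain x1 x2 where x: "x1 \<in> Q1 - fst K'" "x2 \<in> Q2 - fst K'"
      by blast
    let ?A = "{c, x1, x2}"
    have "valid (shared_bit ?A) K"
      using \<open>c \<in> fst K\<close> by (auto simp: valid_shared_bit_iff)
    moreover have "\<not> valid (shared_bit ?A) K'"
    proof -
      have "2 \<le> size {#Q \<in># snd K'. Q \<inter> ?A \<noteq> {}#}"
        using x by (intro two_le_size_filter_mset[OF Q(1)]) auto
      with \<open>c \<notin> fst K'\<close> x show ?thesis
        by (auto simp: valid_shared_bit_iff)
    qed
    ultimately show False
      using assms(1) admissible_shared_bit by (auto simp: implies_def)
  qed
qed

lemma implies_IK_subset:
  assumes "implies n K K'"
  shows "IK K' \<subseteq> IK K"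
proof
  fix d assume "d \<in> IK K'"
  show "d \<in> IK K"
  proof (rule ccontr)
    assume "d \<notin> IK K"
    have filter_d: "{#Q \<in># M. Q \<inter> {d} \<noteq> {}#} = {#Q \<in># M. d \<in> Q#}" for M :: "nat set multiset"
      by (auto intro: filter_mset_cong)
    have "valid (shared_bit {d}) K"
      using \<open>d \<notin> IK K\<close> by (auto simp: valid_shared_bit_iff filter_d mem_IK_iff)
    moreover have "\<not> valid (shared_bit {d}) K'"
      using \<open>d \<in> IK K'\<close> by (auto simp: valid_shared_bit_iff filter_d mem_IK_iff)
    ultimately show False
      using assms admissible_shared_bit by (auto simp: implies_def)
  qed
qed

lemma implies_fst_diff_IK_subset:
  assumes "implies n K K'" "canGF (pur K) = Some (C, I, Ps)"
    and "{#Q1, Q2#} \<subseteq># snd K'" "y1 \<in> Q1" "y2 \<in> Q2"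
    and "y1 \<notin> fst K \<union> fst K' \<union> IK K \<union> IK K'" "y2 \<notin> fst K \<union> fst K' \<union> IK K \<union> IK K'"
  shows "fst K' - IK K \<subseteq> fst K \<union> \<Union>(set_mset Ps)"
proof
  fix x assume x: "x \<in> fst K' - IK K"
  show "x \<in> fst K \<union> \<Union>(set_mset Ps)"
  proof (rule ccontr)
    assume x_out: "x \<notin> fst K \<union> \<Union>(set_mset Ps)"
    have "y1 \<noteq> y2"
    proof
      assume "y1 = y2"
      then have "2 \<le> occurrences y1 (snd K')"
        using assms(4,5) by (intro two_le_size_filter_mset[OF assms(3)]) auto
      with assms(4,6) show False
        using mem_IK_iff[of y1 K'] by blast
    qed
    with x assms(6,7) have distinct: "distinct [x, y1, y2]"
      by auto
    have "valid (xor_triple x y1 y2) K"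
      using x x_out assms(6,7) by (intro valid_xor_triple[OF assms(2) distinct]) auto
    moreover have "\<not> valid (xor_triple x y1 y2) K'"
    proof -
      have "fst K' \<inter> {x, y1, y2} = {x}"
        using x assms(6,7) by auto
      then have "valid (xor_triple x y1 y2) K' \<longleftrightarrow> size {#Q \<in># snd K'. Q \<inter> {y1, y2} \<noteq> {}#} \<le> 1"
        by (intro valid_iff_size_filter_le_1 condH_xor_triple_given_x[OF distinct])
      moreover have "2 \<le> size {#Q \<in># snd K'. Q \<inter> {y1, y2} \<noteq> {}#}"
        using assms(4,5) by (intro two_le_size_filter_mset[OF assms(3)]) auto
      ultimately show ?thesis
        by linarith
    qed
    ultimately show False
      using assms(1) admissible_xor_triple by (auto simp: implies_def)
  qed
qed

lemma RKK_SomeE: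
  assumes "RKK K K' = Some K''" "IK K' \<subseteq> IK K"
  obtains Q1 Q2 y1 y2 where "fst K'' = fst K' - IK K" "2 \<le> size (snd (pur K'))"
    and "{#Q1, Q2#} \<subseteq># snd K'"
    and "y1 \<in> Q1 - fst K' - IK K' - IK K" "y2 \<in> Q2 - fst K' - IK K' - IK K"
proof -
  obtain C' I' Ps' where can': "canGF (pur K') = Some (C', I', Ps')"
    using assms(1) by (cases "canGF (pur K')") (auto simp: RKK_def)
  note facts' = canGF_SomeD[OF can', unfolded fst_pur, folded IK_def]
  define Ts where "Ts = filter_mset (\<lambda>T. T \<noteq> {}) (image_mset (\<lambda>P. P - IK K) Ps')"
  have "I' - IK K = {}"
    using assms(2) facts'(2) by blast
  with assms(1) facts'(1) have Ts: "2 \<le> size Ts" "K'' = (fst K' - IK K, Ts)"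
    unfolding RKK_def can' by (auto simp: Ts_def Let_def split: if_splits)
  then have "Ps' = Pparts (pur K')"
    using facts'(4) by (auto simp: Ts_def)
  then have "size Ts = size {#Q \<in># snd K'. Q - fst K' - IK K' - IK K \<noteq> {}#}"
    by (auto simp: Ts_def Pparts_pur filter_mset_image_mset filter_filter_mset
        intro!: arg_cong[where f = size] filter_mset_cong)
  with Ts(1) have "2 \<le> size {#Q \<in># snd K'. Q - fst K' - IK K' - IK K \<noteq> {}#}"
    by linarith
  then obtain Q1 Q2 where "{#Q1, Q2#} \<subseteq># snd K'"
      "Q1 - fst K' - IK K' - IK K \<noteq> {}" "Q2 - fst K' - IK K' - IK K \<noteq> {}"
    by (rule two_le_size_filter_msetE)
  with Ts(2) facts'(3) show ?thesis
    using that by auto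
qed

theorem mainTheorem9:
  fixes n :: nat and K K' K'' :: cmi
    and C I C'' I'' :: "nat set" and Ps Ps'' :: "nat set multiset"
  assumes "wf_cmi n K" and "wf_cmi n K'"
    and "\<not> degenerate n K" and "\<not> degenerate n K'"
    and "canGF (pur K) = Some (C, I, Ps)"
    and "implies n K K'"
    and "RKK K K' = Some K''"
    and "canGF (pur K'') = Some (C'', I'', Ps'')"
  shows "C \<subseteq> C'' \<and> C'' \<subseteq> (C \<union> \<Union>(set_mset Ps)) - \<Union>(set_mset Ps'')"
proof -
  note can = assms(5) and imp = assms(6) and can'' = assms(8)
  obtain Q1 Q2 y1 y2 where K'': "fst K'' = fst K' - IK K" and size': "2 \<le> size (snd (pur K'))"
    and Q: "{#Q1, Q2#} \<subseteq># snd K'"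
    and y: "y1 \<in> Q1 - fst K' - IK K' - IK K" "y2 \<in> Q2 - fst K' - IK K' - IK K"
    using RKK_SomeE[OF assms(7) implies_IK_subset[OF imp]] by blast
  have C: "C = fst K" and C'': "C'' = fst K' - IK K"
    using canGF_SomeD(1)[OF can] canGF_SomeD(1)[OF can''] K'' by simp_all
  have "fst K \<subseteq> fst K'"
    by (rule implies_fst_subset[OF imp size'])
  moreover have "fst K \<inter> IK K = {}"
    by (auto simp: mem_IK_iff)
  ultimately have "C \<subseteq> C''"
    using C C'' by blast
  moreover have "C'' \<subseteq> C \<union> \<Union>(set_mset Ps)"
    using implies_fst_diff_IK_subset[OF imp can Q] y \<open>fst K \<subseteq> fst K'\<close> C C'' by blast
  moreover have "C'' \<inter> \<Union>(set_mset Ps'') = {}"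
    using canGF_SomeD(4)[OF can''] Pparts_pur_disjoint_fst[of _ K''] C'' K'' by auto
  ultimately show ?thesis
    by blast
qed

end
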